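(* Let $\mathbb{K}\in\{\mathbb{R},\mathbb{C}\}$, let $\mathcal{X}$ be a separable topological $\mathbb{K}$-vector space whose topological dual $\mathcal{X}^{\ast}$ separates the points of $\mathcal{X}$, and let $\mathcal{U}$ be a $0$-neighborhood in $\mathcal{X}$. Then every net $(U_j)_{j\in J}\subseteq\mathbf{CU}_{\mathcal{U}}(\mathcal{X}^{\ast})$ that converges in the weak*-Hausdorff hypertopology converges to $U_\infty=\mathrm{Li}_{j\in J}U_j=\mathrm{Ls}_{j\in J}U_j\in\mathbf{CU}_{\mathcal{U}}(\mathcal{X}^{\ast})$.
   Context: Topological vector spaces are Hausdorff. $\mathcal{X}^{\ast}$ carries the weak* topology. $\mathcal{U}^{\circ}=\{\sigma\in\mathcal{X}^{\ast}:|\sigma(A)|\le1\ \forall A\in\mathcal{U}\}$; $\mathbf{CU}_{\mathcal{U}}(\mathcal{X}^{\ast})$ is the set of nonempty convex weak*-closed subsets of $\mathcal{U}^{\circ}$. The weak*-Hausdorff hypertopology is generated by the extended pseudometrics $d_H^{(A)}(F,\tilde F)=\max\{\sup_{\sigma\in F}\inf_{\tilde\sigma\in\tilde F}|(\sigma-\tilde\sigma)(A)|,\ \sup_{\tilde\sigma\in\tilde F}\inf_{\sigma\in F}|(\sigma-\tilde\sigma)(A)|\}$, $A\in\mathcal{X}$. For a net $(F_j)_{j\in J}$ of subsets of $\mathcal{X}^{\ast}$: $\mathrm{Li}_{j\in J}F_j$ is the set of weak* limits of nets $(\sigma_j)_{j\in J}$ with $\sigma_j\in F_j$ for all $j\succ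 j_0$ for some $j_0$; $\mathrm{Ls}_{j\in J}F_j$ is the set of weak* limits of nets $(\sigma_i)_{i\in I}$ with $\sigma_i\in F_{s(i)}$ for some subnet $(F_{s(i)})_{i\in I}$. *)

theory Defs
  imports "HOL-Analysis.Analysis"
begin

text \<open>The vector space X is a type 'a with its additive group,
  a scalar multiplication by complex numbers (only scalars in K matter) and a topology T.\<close>

definition scalar_field :: "complex set \<Rightarrow> bool" where
  "scalar_field K \<longleftrightarrow> K = \<real> \<or> K = UNIV"

definition tvs :: "complex set \<Rightarrow> (complex \<Rightarrow> 'a::ab_group_add \<Rightarrow> 'a) \<Rightarrow> 'a topology \<Rightarrow> bool" where
  "tvs K smul T \<longleftrightarrow>
     scalar_field K \<and>
     (\<forall>a\<in>K. \<forall>x y. smul a (x + y) = smul a x + smul a y) \<and>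
     (\<forall>a\<in>K. \<forall>b\<in>K. \<forall>x. smul (a + b) x = smul a x + smul b x) \<and>
     (\<forall>a\<in>K. \<forall>b\<in>K. \<forall>x. smul a (smul b x) = smul (a * b) x) \<and>
     (\<forall>x. smul 1 x = x) \<and>
     topspace T = UNIV \<and>
     Hausdorff_space T \<and>
     continuous_map (prod_topology T T) T (\<lambda>(x, y). x + y) \<and>
     continuous_map (prod_topology (subtopology euclidean K) T) T (\<lambda>(a, x). smul a x)"

definition tdual :: "complex set \<Rightarrow> (complex \<Rightarrow> 'a::ab_group_add \<Rightarrow> 'a) \<Rightarrow> 'a topology \<Rightarrow> ('a \<Rightarrow> complex) set" where
  "tdual K smul T = {\<sigma>. (\<forall>x y. \<sigma> (x + y) = \<sigma> x + \<sigma> y) \<and>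
                          (\<forall>a\<in>K. \<forall>x. \<sigma> (smul a x) = a * \<sigma> x) \<and>
                          (\<forall>x. \<sigma> x \<in> K) \<and>
                          continuous_map T euclidean \<sigma>}"

definition dual_separates_points :: "complex set \<Rightarrow> (complex \<Rightarrow> 'a::ab_group_add \<Rightarrow> 'a) \<Rightarrow> 'a topology \<Rightarrow> bool" where
  "dual_separates_points K smul T \<longleftrightarrow>
     (\<forall>x y. x \<noteq> y \<longrightarrow> (\<exists>\<sigma>\<in>tdual K smul T. \<sigma> x \<noteq> \<sigma> y))"

definition zero_nhd :: "'a::ab_group_add topology \<Rightarrow> 'a set \<Rightarrow> bool" where
  "zero_nhd T U \<longleftrightarrow> (\<exists>V. openin T V \<and> 0 \<in> V \<and> V \<subseteq> U)"

text \<open>Weak* topology on the dual: topology of pointwise convergence, i.e. the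
  subspace topology of the product topology on functions 'a => complex.\<close>
definition weakstar :: "complex set \<Rightarrow> (complex \<Rightarrow> 'a::ab_group_add \<Rightarrow> 'a) \<Rightarrow> 'a topology \<Rightarrow> ('a \<Rightarrow> complex) topology" where
  "weakstar K smul T = subtopology (product_topology (\<lambda>_. euclidean) UNIV) (tdual K smul T)"

definition polar :: "complex set \<Rightarrow> (complex \<Rightarrow> 'a::ab_group_add \<Rightarrow> 'a) \<Rightarrow> 'a topology \<Rightarrow> 'a set \<Rightarrow> ('a \<Rightarrow> complex) set" where
  "polar K smul T U = {\<sigma>\<in>tdual K smul T. \<forall>A\<in>U. cmod (\<sigma> A) \<le> 1}"

definition convex_fun_set :: "('a \<Rightarrow> complex) set \<Rightarrow> bool" where
  "convex_fun_set F \<longleftrightarrow> (\<forall>\<sigma>\<in>F. \<forall>\<tau>\<in>F. \<forall>t::real. 0 \<le> t \<and> t \<le> 1 \<longrightarrow>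
       (\<lambda>x. complex_of_real t * \<sigma> x + complex_of_real (1 - t) * \<tau> x) \<in> F)"

definition CU :: "complex set \<Rightarrow> (complex \<Rightarrow> 'a::ab_group_add \<Rightarrow> 'a) \<Rightarrow> 'a topology \<Rightarrow> 'a set \<Rightarrow> ('a \<Rightarrow> complex) set set" where
  "CU K smul T U = {F. F \<noteq> {} \<and> F \<subseteq> polar K smul T U \<and> convex_fun_set F \<and>
                        closedin (weakstar K smul T) F}"

definition dH :: "'a \<Rightarrow> ('a \<Rightarrow> complex) set \<Rightarrow> ('a \<Rightarrow> complex) set \<Rightarrow> ereal" where
  "dH A F G = max (SUP \<sigma>\<in>F. INF \<tau>\<in>G. ereal (cmod (\<sigma> A - \<tau> A)))
                  (SUP \<tau>\<in>G. INF \<sigma>\<in>F. ereal (cmod (\<sigma> A - \<tau> A)))"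

definition directed :: "'j set \<Rightarrow> ('j \<Rightarrow> 'j \<Rightarrow> bool) \<Rightarrow> bool" where
  "directed J le \<longleftrightarrow> J \<noteq> {} \<and> (\<forall>i\<in>J. le i i) \<and>
     (\<forall>i\<in>J. \<forall>j\<in>J. \<forall>k\<in>J. le i j \<and> le j k \<longrightarrow> le i k) \<and>
     (\<forall>i\<in>J. \<forall>j\<in>J. \<exists>k\<in>J. le i k \<and> le j k)"

definition net_limit :: "'b topology \<Rightarrow> 'j set \<Rightarrow> ('j \<Rightarrow> 'j \<Rightarrow> bool) \<Rightarrow> ('j \<Rightarrow> 'b) \<Rightarrow> 'b \<Rightarrow> bool" where
  "net_limit X J le f l \<longleftrightarrow> l \<in> topspace X \<and>
     (\<forall>W. openin X W \<and> l \<in> W \<longrightarrow> (\<exists>j0\<in>J. \<forall>j\<in>J. le j0 j \<longrightarrow> f j \<in> W))"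

text \<open>Convergence in the hypertopology generated by the pseudometrics dH A, A in X.\<close>
definition wsH_converges :: "'j set \<Rightarrow> ('j \<Rightarrow> 'j \<Rightarrow> bool) \<Rightarrow> ('j \<Rightarrow> ('a \<Rightarrow> complex) set) \<Rightarrow> ('a \<Rightarrow> complex) set \<Rightarrow> bool" where
  "wsH_converges J le F G \<longleftrightarrow>
     (\<forall>A. \<forall>\<epsilon>>0. \<exists>j0\<in>J. \<forall>j\<in>J. le j0 j \<longrightarrow> dH A (F j) G < ereal \<epsilon>)"

definition Li :: "('b \<Rightarrow> complex) topology \<Rightarrow> 'j set \<Rightarrow> ('j \<Rightarrow> 'j \<Rightarrow> bool) \<Rightarrow> ('j \<Rightarrow> ('b \<Rightarrow> complex) set) \<Rightarrow> ('b \<Rightarrow> complex) set" where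
  "Li X J le F = {\<sigma>. \<exists>s j0. j0 \<in> J \<and> (\<forall>j\<in>J. le j0 j \<longrightarrow> s j \<in> F j) \<and> net_limit X J le s \<sigma>}"

text \<open>Subnet index sets are taken in the type 'j \<times> ('b \<Rightarrow> complex) set, which is
  large enough for every cluster point (index by pairs (j, neighbourhood)).\<close>
definition Ls :: "('b \<Rightarrow> complex) topology \<Rightarrow> 'j set \<Rightarrow> ('j \<Rightarrow> 'j \<Rightarrow> bool) \<Rightarrow> ('j \<Rightarrow> ('b \<Rightarrow> complex) set) \<Rightarrow> ('b \<Rightarrow> complex) set" where
  "Ls X J le F = {\<sigma>. \<exists>(I :: ('j \<times> ('b \<Rightarrow> complex) set) set) leI s \<tau>.
       directed I leI \<and> s ` I \<subseteq> J \<and>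
       (\<forall>j0\<in>J. \<exists>i0\<in>I. \<forall>i\<in>I. leI i0 i \<longrightarrow> le j0 (s i)) \<and>
       (\<forall>i\<in>I. \<tau> i \<in> F (s i)) \<and> net_limit X I leI \<tau> \<sigma>}"

end

(* Let G be the weak*-Hausdorff limit. A functional sigma outside G has a weak* box around it
   missing G; since G is convex, a projection argument in the finitely many coordinates of the box
   separates sigma from G by a single element B = sum c_A A of X, and d_H^(B) then keeps the
   functionals of the F_j away from sigma, so sigma is not in Ls. Conversely, for sigma in G the
   same separation, made uniform over a finite net of coefficient vectors, shows that eventually
   F_j meets every weak* box around sigma. Separability of X makes the weak* topology on the polar
   first countable, and a diagonal choice gives a single net in the F_j converging to sigma, so
   sigma is in Li. As Li is always contained in Ls, Li = Ls = G. *)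
theory Submission
  imports Defs
begin

section \<open>Topological vector spaces, duals and polars\<close>

lemma scalar_field_of_real: "scalar_field K \<Longrightarrow> complex_of_real r \<in> K"
  by (auto simp: scalar_field_def)

lemma scalar_field_cnj_diff: "scalar_field K \<Longrightarrow> a \<in> K \<Longrightarrow> b \<in> K \<Longrightarrow> cnj (a - b) \<in> K"
  by (auto simp: scalar_field_def Reals_cnj_iff)

lemma scalar_field_closed: "scalar_field K \<Longrightarrow> closed K"
  by (auto simp: scalar_field_def closed_complex_Reals)

lemma tvs_scalar_field: "tvs K smul T \<Longrightarrow> scalar_field K"
  by (simp add: tvs_def)

lemma tvs_smul_zero_left:
  assumes "tvs K smul T"
  shows "smul 0 x = 0"
proof -
  have "(0::complex) \<in> K" using scalar_field_of_real[OF tvs_scalar_field[OF assms], of 0] by simp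
  then have "smul (0 + 0) x = smul 0 x + smul 0 x" using assms unfolding tvs_def by blast
  then show ?thesis by simp
qed

lemma tvs_smul_zero_right:
  assumes "tvs K smul T" "a \<in> K"
  shows "smul a 0 = 0"
proof -
  have "smul a (0 + 0) = smul a 0 + smul a 0" using assms unfolding tvs_def by blast
  then show ?thesis by simp
qed

lemma tvs_continuous_map_smul_left:
  assumes "tvs K smul T"
  shows "continuous_map (subtopology euclidean K) T (\<lambda>a. smul a x)"
proof -
  have "continuous_map (subtopology euclidean K) (prod_topology (subtopology euclidean K) T) (\<lambda>a. (a, x))"
    using assms by (intro continuous_map_pairedI continuous_map_id) (simp_all add: tvs_def)
  moreover have "continuous_map (prod_topology (subtopology euclidean K) T) T (\<lambda>(a, x). smul a x)"
    using assms by (simp add: tvs_def)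
  ultimately show ?thesis
    using continuous_map_compose by (fastforce simp: o_def)
qed

lemma tvs_continuous_map_smul_shift:
  assumes "tvs K smul T" "c \<in> K"
  shows "continuous_map T T (\<lambda>x. smul c (x - b))"
proof -
  have "continuous_map T (prod_topology T T) (\<lambda>x. (x, - b))"
    using assms by (intro continuous_map_pairedI continuous_map_id) (simp_all add: tvs_def)
  moreover have "continuous_map (prod_topology T T) T (\<lambda>(x, y). x + y)"
    using assms by (simp add: tvs_def)
  ultimately have shift: "continuous_map T T (\<lambda>x. x - b)"
    using continuous_map_compose by (fastforce simp: o_def)
  have "continuous_map T (prod_topology (subtopology euclidean K) T) (\<lambda>y. (c, y))"
    using assms by (intro continuous_map_pairedI continuous_map_id) simp_all
  moreover have "continuous_map (prod_topology (subtopology euclidean K) T) T (\<lambda>(a, x). smul a x)"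
    using assms by (simp add: tvs_def)
  ultimately have "continuous_map T T (smul c)"
    using continuous_map_compose by (fastforce simp: o_def)
  then show ?thesis
    using continuous_map_compose[OF shift] by (simp add: o_def)
qed

lemma zero_nhd_absorbing:
  assumes "tvs K smul T" "zero_nhd T V"
  shows "\<exists>t>0. smul (complex_of_real t) x \<in> V"
proof -
  obtain W where W: "openin T W" "0 \<in> W" "W \<subseteq> V"
    using assms(2) by (auto simp: zero_nhd_def)
  have "openin (subtopology euclidean K) {a \<in> K. smul a x \<in> W}"
    using openin_continuous_map_preimage[OF tvs_continuous_map_smul_left[OF assms(1)] W(1)] by simp
  then obtain Op where Op: "open Op" "{a \<in> K. smul a x \<in> W} = Op \<inter> K"
    by (auto simp: openin_subtopology)
  have "0 \<in> Op"
    using Op(2) W(2) tvs_smul_zero_left[OF assms(1)]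
      scalar_field_of_real[OF tvs_scalar_field[OF assms(1)], of 0]
    by auto
  then obtain r where r: "r > 0" "ball 0 r \<subseteq> Op"
    using Op(1) open_contains_ball_eq by blast
  have "complex_of_real (r/2) \<in> Op \<inter> K"
    using r scalar_field_of_real[OF tvs_scalar_field[OF assms(1)], of "r/2"] by auto
  then show ?thesis
    using Op(2) W(3) r(1) by (intro exI[of _ "r/2"]) auto
qed

lemma tdual_add: "\<sigma> \<in> tdual K smul T \<Longrightarrow> \<sigma> (x + y) = \<sigma> x + \<sigma> y"
  by (simp add: tdual_def)

lemma tdual_zero: "\<sigma> \<in> tdual K smul T \<Longrightarrow> \<sigma> 0 = 0"
  using tdual_add[of \<sigma> K smul T 0 0] by simp

lemma tdual_diff: "\<sigma> \<in> tdual K smul T \<Longrightarrow> \<sigma> (x - y) = \<sigma> x - \<sigma> y"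
  by (metis tdual_add diff_add_cancel add_diff_cancel)

lemma tdual_smul: "\<sigma> \<in> tdual K smul T \<Longrightarrow> a \<in> K \<Longrightarrow> \<sigma> (smul a x) = a * \<sigma> x"
  by (simp add: tdual_def)

lemma tdual_in_scalar_field: "\<sigma> \<in> tdual K smul T \<Longrightarrow> \<sigma> x \<in> K"
  by (simp add: tdual_def)

lemma tdual_sum_smul:
  assumes "\<sigma> \<in> tdual K smul T" "finite S" "\<forall>A\<in>S. c A \<in> K"
  shows "\<sigma> (\<Sum>A\<in>S. smul (c A) A) = (\<Sum>A\<in>S. c A * \<sigma> A)"
  using assms(2,3)
  by (induction S rule: finite_induct)
    (simp_all add: tdual_zero[OF assms(1)] tdual_add[OF assms(1)] tdual_smul[OF assms(1)])

lemma polar_subset_tdual: "polar K smul T U \<subseteq> tdual K smul T"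
  by (auto simp: polar_def)

lemma polar_equicontinuous:
  assumes "tvs K smul T" "zero_nhd T U" "e > 0"
  shows "\<exists>N. openin T N \<and> A \<in> N \<and> (\<forall>x\<in>N. \<forall>\<sigma>\<in>polar K smul T U. cmod (\<sigma> x - \<sigma> A) \<le> e)"
proof -
  obtain V where V: "openin T V" "0 \<in> V" "V \<subseteq> U"
    using assms(2) by (auto simp: zero_nhd_def)
  define c where "c = complex_of_real (1/e)"
  have cK: "c \<in> K"
    unfolding c_def by (rule scalar_field_of_real[OF tvs_scalar_field[OF assms(1)]])
  define N where "N = {x \<in> topspace T. smul c (x - A) \<in> V}"
  have "openin T N"
    unfolding N_def by (rule openin_continuous_map_preimage[OF tvs_continuous_map_smul_shift[OF assms(1) cK] V(1)])
  moreover have "A \<in> N"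
    using assms(1) V(2) tvs_smul_zero_right[OF assms(1) cK] by (simp add: N_def tvs_def)
  moreover have "cmod (\<sigma> x - \<sigma> A) \<le> e" if "x \<in> N" "\<sigma> \<in> polar K smul T U" for x \<sigma>
  proof -
    have "\<sigma> \<in> tdual K smul T" using that(2) by (simp add: polar_def)
    then have "\<sigma> (smul c (x - A)) = c * (\<sigma> x - \<sigma> A)"
      using cK by (simp add: tdual_smul tdual_diff)
    moreover have "cmod (\<sigma> (smul c (x - A))) \<le> 1"
      using that V(3) by (auto simp: N_def polar_def)
    ultimately have "cmod (\<sigma> x - \<sigma> A) / e \<le> 1"
      using assms(3) by (simp add: c_def norm_mult norm_divide)
    then show ?thesis using assms(3) by simp
  qed
  ultimately show ?thesis by blast
qed

lemma polar_pointwise_bounded: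
  assumes "tvs K smul T" "zero_nhd T U"
  shows "\<exists>M. \<forall>\<sigma>\<in>polar K smul T U. cmod (\<sigma> A) \<le> M"
proof -
  obtain t where t: "t > 0" "smul (complex_of_real t) A \<in> U"
    using zero_nhd_absorbing[OF assms] by blast
  have "cmod (\<sigma> A) \<le> 1/t" if "\<sigma> \<in> polar K smul T U" for \<sigma>
  proof -
    have "\<sigma> (smul (complex_of_real t) A) = complex_of_real t * \<sigma> A"
      using that scalar_field_of_real[OF tvs_scalar_field[OF assms(1)]] by (intro tdual_smul) (auto simp: polar_def)
    then have "t * cmod (\<sigma> A) \<le> 1"
      using that t by (auto simp: polar_def norm_mult)
    then show ?thesis using t(1) by (simp add: field_simps)
  qed
  then show ?thesis by blast
qed

lemma polar_bounded_on_finite: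
  assumes "tvs K smul T" "zero_nhd T U" "finite S"
  shows "\<exists>M\<ge>0. \<forall>\<sigma>\<in>polar K smul T U. \<forall>A\<in>S. cmod (\<sigma> A) \<le> M"
proof -
  obtain bound where bound: "\<And>A. \<forall>\<sigma>\<in>polar K smul T U. cmod (\<sigma> A) \<le> bound A"
    using polar_pointwise_bounded[OF assms(1,2)] by metis
  have "\<forall>\<sigma>\<in>polar K smul T U. \<forall>A\<in>S. cmod (\<sigma> A) \<le> Max (insert 0 (bound ` S))"
    using bound assms(3) by (meson Max_ge finite_imageI finite_insert image_eqI insertCI order_trans)
  then show ?thesis by (intro exI[of _ "Max (insert 0 (bound ` S))"]) (simp add: assms(3))
qed

lemma topspace_weakstar: "topspace (weakstar K smul T) = tdual K smul T"
  by (simp add: weakstar_def)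

lemma openin_weakstar_contains_box:
  assumes "openin (weakstar K smul T) W" "\<sigma> \<in> W"
  shows "\<exists>S e. finite S \<and> e > 0 \<and>
    (\<forall>\<tau>\<in>tdual K smul T. (\<forall>A\<in>S. cmod (\<tau> A - \<sigma> A) < e) \<longrightarrow> \<tau> \<in> W)"
proof -
  obtain W' where W': "openin (product_topology (\<lambda>_. euclidean) UNIV) W'" "W = W' \<inter> tdual K smul T"
    using assms(1) by (auto simp: weakstar_def openin_subtopology)
  have "\<sigma> \<in> W'" using assms(2) W'(2) by simp
  then have "\<exists>V. finite {A. V A \<noteq> UNIV} \<and> (\<forall>A. open (V A)) \<and> \<sigma> \<in> Pi\<^sub>E UNIV V \<and> Pi\<^sub>E UNIV V \<subseteq> W'"
    using W'(1) unfolding openin_product_topology_alt by simp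
  then obtain V where V: "finite {A. V A \<noteq> UNIV}" "\<forall>A. open (V A)" "\<sigma> \<in> Pi\<^sub>E UNIV V"
      "Pi\<^sub>E UNIV V \<subseteq> W'"
    by blast
  define S where "S = {A. V A \<noteq> UNIV}"
  have "\<exists>e>0. ball (\<sigma> A) e \<subseteq> V A" for A
    using V(2,3) open_contains_ball_eq by (metis PiE_iff UNIV_I)
  then obtain r where r: "\<And>A. r A > 0" "\<And>A. ball (\<sigma> A) (r A) \<subseteq> V A"
    by metis
  define e where "e = Min (insert 1 (r ` S))"
  have fin: "finite S" using V(1) by (simp add: S_def)
  have e: "e > 0" "\<And>A. A \<in> S \<Longrightarrow> e \<le> r A"
    using fin r(1) by (auto simp: e_def)
  have "\<tau> \<in> W" if \<tau>: "\<tau> \<in> tdual K smul T" "\<forall>A\<in>S. cmod (\<tau> A - \<sigma> A) < e" for \<tau>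
  proof -
    have "\<tau> A \<in> V A" for A
    proof (cases "A \<in> S")
      case True
      then have "dist (\<sigma> A) (\<tau> A) < r A"
        using \<tau>(2) e(2)[OF True] True by (fastforce simp: dist_norm norm_minus_commute)
      then show ?thesis using r(2)[of A] by (simp add: subset_iff)
    qed (simp add: S_def)
    then have "\<tau> \<in> Pi\<^sub>E UNIV V" by (simp add: PiE_iff)
    then show ?thesis using V(4) W'(2) \<tau>(1) by blast
  qed
  then show ?thesis using fin e(1) by blast
qed

lemma openin_weakstar_eval_ball:
  "openin (weakstar K smul T) {\<tau> \<in> tdual K smul T. cmod (\<tau> B - z) < e}"
proof -
  have "continuous_map (product_topology (\<lambda>_. euclidean) UNIV) euclidean (\<lambda>\<tau>::'a \<Rightarrow> complex. \<tau> B)"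
    using continuous_map_product_projection[of B UNIV "\<lambda>_. euclidean"] by simp
  from openin_continuous_map_preimage[OF this, of "ball z e"]
  have "openin (product_topology (\<lambda>_. euclidean) UNIV) {\<tau>::'a \<Rightarrow> complex. cmod (\<tau> B - z) < e}"
    by (simp add: dist_norm norm_minus_commute)
  then show ?thesis
    unfolding weakstar_def openin_subtopology by (intro exI[of _ "{\<tau>. cmod (\<tau> B - z) < e}"]) auto
qed

section \<open>Nets as filters\<close>

lemma directed_nonempty: "directed J le \<Longrightarrow> J \<noteq> {}"
  by (simp add: directed_def)

lemma directed_refl: "directed J le \<Longrightarrow> i \<in> J \<Longrightarrow> le i i"
  by (simp add: directed_def)

lemma directed_trans: "directed J le \<Longrightarrow> i \<in> J \<Longrightarrow> j \<in> J \<Longrightarrow> k \<in> J \<Longrightarrow> le i j \<Longrightarrow> le j k \<Longrightarrow> le i k"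
  unfolding directed_def by blast

lemma directed_upper_bound: "directed J le \<Longrightarrow> i \<in> J \<Longrightarrow> j \<in> J \<Longrightarrow> \<exists>k\<in>J. le i k \<and> le j k"
  unfolding directed_def by blast

definition net_filter :: "'j set \<Rightarrow> ('j \<Rightarrow> 'j \<Rightarrow> bool) \<Rightarrow> 'j filter" where
  "net_filter J le = (INF j0\<in>J. principal {j \<in> J. le j0 j})"

lemma eventually_net_filter:
  assumes "directed J le"
  shows "eventually P (net_filter J le) \<longleftrightarrow> (\<exists>j0\<in>J. \<forall>j\<in>J. le j0 j \<longrightarrow> P j)"
proof -
  have base: "\<exists>k\<in>J. principal {j \<in> J. le k j} \<le> inf (principal {j \<in> J. le a j}) (principal {j \<in> J. le b j})"
    if ab: "a \<in> J" "b \<in> J" for a b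
  proof -
    obtain k where k: "k \<in> J" "le a k" "le b k"
      using directed_upper_bound[OF assms ab] by blast
    then have "{j \<in> J. le k j} \<subseteq> {j \<in> J. le a j} \<inter> {j \<in> J. le b j}"
      using directed_trans[OF assms] ab by blast
    with k(1) show ?thesis by (auto simp: inf_principal)
  qed
  have "eventually P (net_filter J le) \<longleftrightarrow> (\<exists>j0\<in>J. eventually P (principal {j \<in> J. le j0 j}))"
    unfolding net_filter_def by (rule eventually_INF_base[OF directed_nonempty[OF assms] base])
  then show ?thesis by (auto simp: eventually_principal)
qed

lemma net_filter_ne_bot:
  assumes "directed J le"
  shows "net_filter J le \<noteq> bot"
proof
  assume "net_filter J le = bot"
  then obtain j0 where "j0 \<in> J" "\<forall>j\<in>J. le j0 j \<longrightarrow> False"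
    using eventually_net_filter[OF assms, of "\<lambda>_. False"] by auto
  then show False using directed_refl[OF assms] by blast
qed

lemma eventually_in_net_filter: "directed J le \<Longrightarrow> \<forall>\<^sub>F j in net_filter J le. j \<in> J"
  using directed_nonempty[of J le] by (auto simp: eventually_net_filter)

lemma net_limit_iff_limitin:
  "directed J le \<Longrightarrow> net_limit X J le f l \<longleftrightarrow> limitin X f l (net_filter J le)"
  by (simp add: net_limit_def limitin_def eventually_net_filter)

lemma filterlim_subnet:
  assumes "directed J le" "directed I leI" "s ` I \<subseteq> J"
    "\<forall>j0\<in>J. \<exists>i0\<in>I. \<forall>i\<in>I. leI i0 i \<longrightarrow> le j0 (s i)"
  shows "filterlim s (net_filter J le) (net_filter I leI)"
  unfolding filterlim_iff eventually_net_filter[OF assms(1)] eventually_net_filter[OF assms(2)]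
proof (intro allI impI)
  fix P assume "\<exists>j0\<in>J. \<forall>j\<in>J. le j0 j \<longrightarrow> P j"
  then obtain j0 where j0: "j0 \<in> J" "\<forall>j\<in>J. le j0 j \<longrightarrow> P j" by blast
  then obtain i0 where i0: "i0 \<in> I" "\<forall>i\<in>I. leI i0 i \<longrightarrow> le j0 (s i)"
    using assms(4) by blast
  have "P (s i)" if "i \<in> I" "leI i0 i" for i
    using that i0(2) j0(2) assms(3) by blast
  with i0(1) show "\<exists>i0\<in>I. \<forall>i\<in>I. leI i0 i \<longrightarrow> P (s i)" by blast
qed

lemma limitin_compose_filterlim:
  assumes "limitin X f l F" "filterlim g F G"
  shows "limitin X (\<lambda>x. f (g x)) l G"
  unfolding limitin_def
proof (intro conjI allI impI)
  show "l \<in> topspace X" using assms(1) by (simp add: limitin_def)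
  fix V assume "openin X V \<and> l \<in> V"
  then have "\<forall>\<^sub>F y in F. f y \<in> V" using assms(1) by (simp add: limitin_def)
  then show "\<forall>\<^sub>F x in G. f (g x) \<in> V" using assms(2) by (rule eventually_compose_filterlim)
qed

lemma directed_tail_pairs:
  assumes dir: "directed J le" and j0: "j0 \<in> J"
  shows "directed {(j, x) | j. j \<in> J \<and> le j0 j} (\<lambda>a b. le (fst a) (fst b))"
  unfolding directed_def
proof (intro conjI ballI impI)
  show "{(j, x) | j. j \<in> J \<and> le j0 j} \<noteq> {}" using j0 directed_refl[OF dir j0] by blast
  show "le (fst i) (fst i)" if "i \<in> {(j, x) | j. j \<in> J \<and> le j0 j}" for i
    using that directed_refl[OF dir] by auto
  show "le (fst i) (fst k)"
    if "i \<in> {(j, x) | j. j \<in> J \<and> le j0 j}" "j \<in> {(j, x) | j. j \<in> J \<and> le j0 j}"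
      "k \<in> {(j, x) | j. j \<in> J \<and> le j0 j}" "le (fst i) (fst j) \<and> le (fst j) (fst k)" for i j k
    using that directed_trans[OF dir, of "fst i" "fst j" "fst k"] by auto
  show "\<exists>k\<in>{(j, x) | j. j \<in> J \<and> le j0 j}. le (fst i) (fst k) \<and> le (fst j) (fst k)"
    if ij: "i \<in> {(j, x) | j. j \<in> J \<and> le j0 j}" "j \<in> {(j, x) | j. j \<in> J \<and> le j0 j}" for i j
  proof -
    obtain k where k: "k \<in> J" "le (fst i) k" "le (fst j) k"
      using ij directed_upper_bound[OF dir, of "fst i" "fst j"] by auto
    have "le j0 k" using ij k directed_trans[OF dir j0, of "fst i" k] by auto
    with k show ?thesis by (intro bexI[of _ "(k, x)"]) auto
  qed
qed

lemma Li_subset_Ls: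
  fixes F :: "'j \<Rightarrow> ('b \<Rightarrow> complex) set" and J :: "'j set"
  assumes dir: "directed J le"
  shows "Li X J le F \<subseteq> Ls X J le F"
proof
  fix \<sigma> assume "\<sigma> \<in> Li X J le F"
  then obtain s j0 where s: "j0 \<in> J" "\<forall>j\<in>J. le j0 j \<longrightarrow> s j \<in> F j" "net_limit X J le s \<sigma>"
    unfolding Li_def by blast
  \<comment> \<open>The subnet is the tail of \<open>J\<close> above \<open>j0\<close>, moved into the index type of \<open>Ls\<close>.\<close>
  define I :: "('j \<times> ('b \<Rightarrow> complex) set) set" where "I = {(j, {}) | j. j \<in> J \<and> le j0 j}"
  define leI where "leI a b = le (fst a) (fst b)" for a b :: "'j \<times> ('b \<Rightarrow> complex) set"
  have dirI: "directed I leI"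
    unfolding I_def leI_def by (rule directed_tail_pairs[OF dir s(1)])
  have cofinal: "\<forall>j1\<in>J. \<exists>i0\<in>I. \<forall>i\<in>I. leI i0 i \<longrightarrow> le j1 (fst i)"
  proof
    fix j1 assume j1: "j1 \<in> J"
    obtain k where k: "k \<in> J" "le j0 k" "le j1 k" using directed_upper_bound[OF dir s(1) j1] by blast
    have "le j1 (fst i)" if "i \<in> I" "leI (k, {}) i" for i
      using that directed_trans[OF dir j1 k(1), of "fst i"] k(3) by (auto simp: I_def leI_def)
    then show "\<exists>i0\<in>I. \<forall>i\<in>I. leI i0 i \<longrightarrow> le j1 (fst i)"
      using k by (intro bexI[of _ "(k, {})"]) (auto simp: I_def)
  qed
  have "fst ` I \<subseteq> J" by (auto simp: I_def)
  have "limitin X s \<sigma> (net_filter J le)"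
    using s(3) by (simp add: net_limit_iff_limitin[OF dir])
  then have "limitin X (\<lambda>i. s (fst i)) \<sigma> (net_filter I leI)"
    by (rule limitin_compose_filterlim[OF _ filterlim_subnet[OF dir dirI \<open>fst ` I \<subseteq> J\<close> cofinal]])
  then have "net_limit X I leI (\<lambda>i. s (fst i)) \<sigma>"
    by (simp add: net_limit_iff_limitin[OF dirI])
  moreover have "\<forall>i\<in>I. s (fst i) \<in> F (fst i)" using s(2) by (auto simp: I_def)
  ultimately show "\<sigma> \<in> Ls X J le F"
    unfolding Ls_def using dirI \<open>fst ` I \<subseteq> J\<close> cofinal
    by (intro CollectI exI[of _ I] exI[of _ leI] exI[of _ fst] exI[of _ "\<lambda>i. s (fst i)"]) simp
qed

definition wsH_tendsto :: "('j \<Rightarrow> ('a \<Rightarrow> complex) set) \<Rightarrow> ('a \<Rightarrow> complex) set \<Rightarrow> 'j filter \<Rightarrow> bool" where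
  "wsH_tendsto F G \<F> \<longleftrightarrow> (\<forall>A \<epsilon>. \<epsilon> > 0 \<longrightarrow> (\<forall>\<^sub>F j in \<F>. dH A (F j) G < ereal \<epsilon>))"

lemma wsH_converges_iff_tendsto:
  "directed J le \<Longrightarrow> wsH_converges J le F G \<longleftrightarrow> wsH_tendsto F G (net_filter J le)"
  unfolding wsH_converges_def wsH_tendsto_def by (simp only: eventually_net_filter)

lemma wsH_tendsto_compose:
  assumes "wsH_tendsto F G \<F>" "filterlim s \<F> \<G>"
  shows "wsH_tendsto (\<lambda>i. F (s i)) G \<G>"
  unfolding wsH_tendsto_def
proof (intro allI impI)
  fix A and \<epsilon> :: real
  assume "\<epsilon> > 0"
  then have "\<forall>\<^sub>F j in \<F>. dH A (F j) G < ereal \<epsilon>"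
    using assms(1) by (simp add: wsH_tendsto_def)
  then show "\<forall>\<^sub>F i in \<G>. dH A (F (s i)) G < ereal \<epsilon>"
    using assms(2) by (rule eventually_compose_filterlim)
qed

lemma dH_lessD1:
  assumes "dH A F G < ereal e" "\<sigma> \<in> F"
  shows "\<exists>\<tau>\<in>G. cmod (\<sigma> A - \<tau> A) < e"
proof -
  have "(SUP \<sigma>\<in>F. INF \<tau>\<in>G. ereal (cmod (\<sigma> A - \<tau> A))) < ereal e"
    using assms(1) unfolding dH_def max_less_iff_conj by (rule conjunct1)
  then have "(INF \<tau>\<in>G. ereal (cmod (\<sigma> A - \<tau> A))) < ereal e"
    using assms(2) by (rule SUP_lessD)
  then show ?thesis unfolding INF_less_iff by auto
qed

lemma dH_lessD2:
  assumes "dH A F G < ereal e" "\<tau> \<in> G"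
  shows "\<exists>\<sigma>\<in>F. cmod (\<sigma> A - \<tau> A) < e"
proof -
  have "(SUP \<tau>\<in>G. INF \<sigma>\<in>F. ereal (cmod (\<sigma> A - \<tau> A))) < ereal e"
    using assms(1) unfolding dH_def max_less_iff_conj by (rule conjunct2)
  then have "(INF \<sigma>\<in>F. ereal (cmod (\<sigma> A - \<tau> A))) < ereal e"
    using assms(2) by (rule SUP_lessD)
  then show ?thesis unfolding INF_less_iff by auto
qed

section \<open>Separation in finitely many coordinates\<close>

lemma sum_cmod_power2_segment:
  "(\<Sum>A\<in>S. (cmod (complex_of_real t * w A - v A))\<^sup>2)
     = t\<^sup>2 * (\<Sum>A\<in>S. (cmod (w A))\<^sup>2) - 2 * t * (\<Sum>A\<in>S. Re (cnj (v A) * w A)) + (\<Sum>A\<in>S. (cmod (v A))\<^sup>2)"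
proof -
  have "(cmod (complex_of_real t * w A - v A))\<^sup>2
      = t\<^sup>2 * (cmod (w A))\<^sup>2 - 2 * t * Re (cnj (v A) * w A) + (cmod (v A))\<^sup>2" for A
    unfolding cmod_power2 by (simp add: power2_eq_square algebra_simps)
  then show ?thesis
    by (simp only: sum.distrib sum_subtractf sum_distrib_left)
qed

text \<open>Comparing a near-minimiser \<open>c\<close> of the squared distance to \<open>p\<close> with the points of the
  segment from \<open>c\<close> towards \<open>\<tau>\<close> gives the variational inequality of the projection onto a
  convex set, up to an error that vanishes with the length \<open>t\<close> of the step.\<close>

lemma near_minimiser_variational_inequality:
  fixes C :: "('a \<Rightarrow> complex) set" and p c \<tau> :: "'a \<Rightarrow> complex"
  assumes "convex_fun_set C" "c \<in> C" "\<tau> \<in> C"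
    and lower: "\<forall>z\<in>C. m \<le> (\<Sum>A\<in>S. (cmod (z A - p A))\<^sup>2)"
    and near: "(\<Sum>A\<in>S. (cmod (c A - p A))\<^sup>2) < m + t * \<delta> / 2"
    and t: "0 < t" "t \<le> 1"
    and step: "t * (\<Sum>A\<in>S. (cmod (\<tau> A - c A))\<^sup>2) \<le> \<delta> / 2"
  shows "(\<Sum>A\<in>S. Re (cnj (p A - c A) * (\<tau> A - c A))) \<le> \<delta> / 2"
proof -
  define v where "v A = p A - c A" for A
  define w where "w A = \<tau> A - c A" for A
  define L where "L = (\<Sum>A\<in>S. Re (cnj (v A) * w A))"
  define Qw where "Qw = (\<Sum>A\<in>S. (cmod (w A))\<^sup>2)"
  define Qv where "Qv = (\<Sum>A\<in>S. (cmod (v A))\<^sup>2)"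
  define z where "z x = complex_of_real t * \<tau> x + complex_of_real (1 - t) * c x" for x
  have "z \<in> C"
    using assms(1-3) t unfolding convex_fun_set_def z_def by simp
  then have "m \<le> (\<Sum>A\<in>S. (cmod (z A - p A))\<^sup>2)" using lower by blast
  moreover have "(\<Sum>A\<in>S. (cmod (z A - p A))\<^sup>2) = t\<^sup>2 * Qw - 2 * t * L + Qv"
  proof -
    have "z A - p A = complex_of_real t * w A - v A" for A
      by (simp add: z_def w_def v_def algebra_simps)
    then show ?thesis unfolding Qw_def L_def Qv_def by (simp add: sum_cmod_power2_segment)
  qed
  moreover have "Qv < m + t * \<delta> / 2"
    using near by (simp add: Qv_def v_def norm_minus_commute)
  moreover have "t\<^sup>2 * Qw \<le> t * (\<delta> / 2)"
    using mult_left_mono[OF step, of t] t(1) by (simp add: Qw_def w_def power2_eq_square mult.assoc)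
  ultimately have "t * (2 * L) < t * \<delta>" by simp
  then show ?thesis using t(1) by (simp add: L_def v_def w_def)
qed

lemma convex_fun_set_separation:
  fixes C :: "('a \<Rightarrow> complex) set" and p :: "'a \<Rightarrow> complex"
  assumes "finite S" "C \<noteq> {}" "convex_fun_set C" "\<forall>\<tau>\<in>C. \<forall>A\<in>S. cmod (\<tau> A) \<le> M" "\<delta> > 0"
    and far: "\<forall>\<tau>\<in>C. \<delta> \<le> (\<Sum>A\<in>S. (cmod (\<tau> A - p A))\<^sup>2)"
  shows "\<exists>c\<in>C. \<forall>\<tau>\<in>C. Re (\<Sum>A\<in>S. cnj (p A - c A) * \<tau> A) \<le> Re (\<Sum>A\<in>S. cnj (p A - c A) * p A) - \<delta>/2"
proof -
  define q where "q \<tau> = (\<Sum>A\<in>S. (cmod (\<tau> A - p A))\<^sup>2)" for \<tau> :: "'a \<Rightarrow> complex"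
  define m where "m = Inf (q ` C)"
  have bdd: "bdd_below (q ` C)"
    unfolding q_def by (intro bdd_belowI[of _ 0]) (auto intro: sum_nonneg)
  have lower: "\<forall>z\<in>C. m \<le> q z"
    unfolding m_def using bdd by (auto intro: cInf_lower)
  define R where "R = 4 * M\<^sup>2 * real (card S)"
  have "R \<ge> 0" by (simp add: R_def)
  define t where "t = min 1 (\<delta> / (2 * R + 1))"
  have t: "0 < t" "t \<le> 1" using assms(5) \<open>R \<ge> 0\<close> by (auto simp: t_def)
  have tR: "t * R \<le> \<delta> / 2"
  proof -
    have "t * R \<le> \<delta> / (2 * R + 1) * R" using \<open>R \<ge> 0\<close> by (intro mult_right_mono) (auto simp: t_def)
    also have "\<dots> \<le> \<delta> / 2" using assms(5) \<open>R \<ge> 0\<close> by (simp add: field_simps)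
    finally show ?thesis .
  qed
  have "Inf (q ` C) < m + t * \<delta> / 2" using t assms(5) by (simp add: m_def)
  then obtain c where c: "c \<in> C" "q c < m + t * \<delta> / 2"
    using cInf_less_iff[OF _ bdd] assms(2) by auto
  show ?thesis
  proof (intro bexI[OF _ c(1)] ballI)
    fix \<tau> assume \<tau>: "\<tau> \<in> C"
    have "(cmod (\<tau> A - c A))\<^sup>2 \<le> (2 * M)\<^sup>2" if "A \<in> S" for A
    proof -
      have "cmod (\<tau> A) \<le> M" "cmod (c A) \<le> M" using assms(4) \<tau> c(1) that by blast+
      then have "cmod (\<tau> A - c A) \<le> 2 * M" using norm_triangle_ineq4[of "\<tau> A" "c A"] by linarith
      then show ?thesis by (intro power_mono) auto
    qed
    then have "(\<Sum>A\<in>S. (cmod (\<tau> A - c A))\<^sup>2) \<le> R"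
      using sum_mono[of S "\<lambda>A. (cmod (\<tau> A - c A))\<^sup>2" "\<lambda>_. (2 * M)\<^sup>2"]
      by (simp add: R_def power2_eq_square mult.commute)
    then have "t * (\<Sum>A\<in>S. (cmod (\<tau> A - c A))\<^sup>2) \<le> t * R"
      using t(1) by (intro mult_left_mono) auto
    then have "t * (\<Sum>A\<in>S. (cmod (\<tau> A - c A))\<^sup>2) \<le> \<delta> / 2"
      using tR by linarith
    then have L: "(\<Sum>A\<in>S. Re (cnj (p A - c A) * (\<tau> A - c A))) \<le> \<delta> / 2"
      using near_minimiser_variational_inequality[OF assms(3) c(1) \<tau> _ _ t] lower c(2)
      unfolding q_def by blast
    have "Re (\<Sum>A\<in>S. cnj (p A - c A) * \<tau> A)
        = Re (\<Sum>A\<in>S. cnj (p A - c A) * c A) + (\<Sum>A\<in>S. Re (cnj (p A - c A) * (\<tau> A - c A)))"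
      by (simp add: Re_sum sum.distrib[symmetric] algebra_simps)
    moreover have "Re (\<Sum>A\<in>S. cnj (p A - c A) * p A)
        = Re (\<Sum>A\<in>S. cnj (p A - c A) * c A) + (\<Sum>A\<in>S. (cmod (p A - c A))\<^sup>2)"
    proof -
      have "Re (cnj (p A - c A) * p A) = Re (cnj (p A - c A) * c A) + (cmod (p A - c A))\<^sup>2" for A
        unfolding cmod_power2 by (simp add: power2_eq_square algebra_simps)
      then show ?thesis by (simp add: Re_sum sum.distrib)
    qed
    moreover have "\<delta> \<le> (\<Sum>A\<in>S. (cmod (p A - c A))\<^sup>2)"
      using far c(1) by (simp add: norm_minus_commute)
    ultimately show "Re (\<Sum>A\<in>S. cnj (p A - c A) * \<tau> A) \<le> Re (\<Sum>A\<in>S. cnj (p A - c A) * p A) - \<delta>/2"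
      using L by linarith
  qed
qed

lemma CU_separation:
  assumes "tvs K smul T" "zero_nhd T U" "C \<in> CU K smul T U" "finite S" "\<epsilon> > 0"
    and far: "\<forall>\<tau>\<in>C. \<exists>A\<in>S. \<epsilon> \<le> cmod (\<tau> A - \<sigma> A)"
  shows "\<exists>c\<in>C. \<forall>\<tau>\<in>C. Re (\<Sum>A\<in>S. cnj (\<sigma> A - c A) * \<tau> A)
                          \<le> Re (\<Sum>A\<in>S. cnj (\<sigma> A - c A) * \<sigma> A) - \<epsilon>\<^sup>2 / 2"
proof -
  obtain M where M: "\<forall>\<tau>\<in>polar K smul T U. \<forall>A\<in>S. cmod (\<tau> A) \<le> M"
    using polar_bounded_on_finite[OF assms(1,2,4)] by blast
  have C: "C \<noteq> {}" "C \<subseteq> polar K smul T U" "convex_fun_set C"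
    using assms(3) by (simp_all add: CU_def)
  have "\<forall>\<tau>\<in>C. \<epsilon>\<^sup>2 \<le> (\<Sum>A\<in>S. (cmod (\<tau> A - \<sigma> A))\<^sup>2)"
  proof
    fix \<tau> assume "\<tau> \<in> C"
    then obtain A where A: "A \<in> S" "\<epsilon> \<le> cmod (\<tau> A - \<sigma> A)" using far by blast
    then have "\<epsilon>\<^sup>2 \<le> (cmod (\<tau> A - \<sigma> A))\<^sup>2" using assms(5) by (intro power_mono) auto
    also have "\<dots> \<le> (\<Sum>A\<in>S. (cmod (\<tau> A - \<sigma> A))\<^sup>2)"
      using assms(4) A(1) by (intro member_le_sum) auto
    finally show "\<epsilon>\<^sup>2 \<le> (\<Sum>A\<in>S. (cmod (\<tau> A - \<sigma> A))\<^sup>2)" .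
  qed
  moreover have "\<forall>\<tau>\<in>C. \<forall>A\<in>S. cmod (\<tau> A) \<le> M" using M C(2) by blast
  moreover have "\<epsilon>\<^sup>2 > 0" using assms(5) by simp
  ultimately show ?thesis
    using convex_fun_set_separation[OF assms(4) C(1,3)] by blast
qed

lemma CU_separating_element:
  assumes tvs: "tvs K smul T" and zn: "zero_nhd T U" and G: "G \<in> CU K smul T U"
    and \<sigma>: "\<sigma> \<in> tdual K smul T" "\<sigma> \<notin> G"
  shows "\<exists>B gap. gap > 0 \<and> (\<forall>g\<in>G. Re (g B) \<le> Re (\<sigma> B) - gap)"
proof -
  have "G \<subseteq> polar K smul T U" using G by (simp add: CU_def)
  then have G_dual: "G \<subseteq> tdual K smul T" using polar_subset_tdual by (rule order_trans)
  have "openin (weakstar K smul T) (tdual K smul T - G)"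
    using G by (simp add: CU_def closedin_def topspace_weakstar)
  moreover have "\<sigma> \<in> tdual K smul T - G" using \<sigma> by blast
  ultimately obtain S e where S: "finite S" "e > 0"
    and box: "\<forall>\<tau>\<in>tdual K smul T. (\<forall>A\<in>S. cmod (\<tau> A - \<sigma> A) < e) \<longrightarrow> \<tau> \<in> tdual K smul T - G"
    using openin_weakstar_contains_box by metis
  have far: "\<forall>g\<in>G. \<exists>A\<in>S. e \<le> cmod (g A - \<sigma> A)"
  proof (rule ballI, rule ccontr)
    fix g assume g: "g \<in> G" and "\<not> (\<exists>A\<in>S. e \<le> cmod (g A - \<sigma> A))"
    then have "\<forall>A\<in>S. cmod (g A - \<sigma> A) < e" by (simp add: not_le)
    then have "g \<in> tdual K smul T - G" using box G_dual g by blast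
    then show False using g by blast
  qed
  obtain c0 where c0: "c0 \<in> G" and sep: "\<forall>g\<in>G. Re (\<Sum>A\<in>S. cnj (\<sigma> A - c0 A) * g A)
                          \<le> Re (\<Sum>A\<in>S. cnj (\<sigma> A - c0 A) * \<sigma> A) - e\<^sup>2 / 2"
    using CU_separation[OF tvs zn G S far] by blast
  define B where "B = (\<Sum>A\<in>S. smul (cnj (\<sigma> A - c0 A)) A)"
  have "c0 \<in> tdual K smul T" using G_dual c0 by blast
  then have coeffs: "\<forall>A\<in>S. cnj (\<sigma> A - c0 A) \<in> K"
    using scalar_field_cnj_diff[OF tvs_scalar_field[OF tvs]] tdual_in_scalar_field \<sigma>(1) by blast
  have eval: "g B = (\<Sum>A\<in>S. cnj (\<sigma> A - c0 A) * g A)" if "g \<in> tdual K smul T" for g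
    unfolding B_def by (rule tdual_sum_smul[OF that S(1) coeffs])
  show ?thesis
  proof (intro exI[of _ B] exI[of _ "e\<^sup>2 / 2"] conjI ballI)
    show "e\<^sup>2 / 2 > 0" using S(2) by simp
    fix g assume "g \<in> G"
    then have "g \<in> tdual K smul T" using G_dual by blast
    then show "Re (g B) \<le> Re (\<sigma> B) - e\<^sup>2 / 2"
      unfolding eval[OF \<sigma>(1)] eval[OF \<open>g \<in> tdual K smul T\<close>] using sep \<open>g \<in> G\<close> by blast
  qed
qed

lemma scalar_field_coefficient_net:
  assumes "scalar_field K" "finite S" "\<rho> > 0"
  shows "\<exists>N. finite N \<and> (\<forall>c'\<in>N. \<forall>A\<in>S. c' A \<in> K) \<and>
    (\<forall>c. (\<forall>A\<in>S. c A \<in> K \<and> cmod (c A) \<le> R) \<longrightarrow> (\<exists>c'\<in>N. \<forall>A\<in>S. cmod (c A - c' A) \<le> \<rho>))"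
proof -
  have "compact (cball 0 R \<inter> K)"
    using scalar_field_closed[OF assms(1)] by (simp add: compact_Int_closed)
  then obtain Z where Z: "finite Z" "Z \<subseteq> cball 0 R \<inter> K" "cball 0 R \<inter> K \<subseteq> (\<Union>z\<in>Z. ball z \<rho>)"
    using seq_compact_imp_totally_bounded[OF compact_imp_seq_compact] assms(3) by metis
  define N where "N = Pi\<^sub>E S (\<lambda>_. Z)"
  have "\<exists>c'\<in>N. \<forall>A\<in>S. cmod (c A - c' A) \<le> \<rho>" if c: "\<forall>A\<in>S. c A \<in> K \<and> cmod (c A) \<le> R" for c
  proof -
    have "\<exists>z\<in>Z. cmod (c A - z) \<le> \<rho>" if "A \<in> S" for A
    proof -
      have "c A \<in> cball 0 R \<inter> K" using c that by simp
      then obtain z where "z \<in> Z" "dist z (c A) < \<rho>" using Z(3) by auto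
      then show ?thesis by (intro bexI[of _ z]) (simp_all add: dist_norm norm_minus_commute)
    qed
    then obtain f where f: "\<forall>A\<in>S. f A \<in> Z \<and> cmod (c A - f A) \<le> \<rho>"
      using bchoice[of S "\<lambda>A z. z \<in> Z \<and> cmod (c A - z) \<le> \<rho>"] by blast
    then show ?thesis by (intro bexI[of _ "restrict f S"]) (simp_all add: N_def)
  qed
  moreover have "finite N" using Z(1) assms(2) by (simp add: N_def finite_PiE)
  moreover have "\<forall>c'\<in>N. \<forall>A\<in>S. c' A \<in> K" using Z(2) by (auto simp: N_def)
  ultimately show ?thesis by blast
qed

lemma norm_sum_mult_diff_le:
  fixes c c' f :: "'a \<Rightarrow> 'b::real_normed_field"
  assumes "\<forall>A\<in>S. norm (c A - c' A) \<le> \<rho>" "\<forall>A\<in>S. norm (f A) \<le> M"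
  shows "norm ((\<Sum>A\<in>S. c A * f A) - (\<Sum>A\<in>S. c' A * f A)) \<le> real (card S) * (\<rho> * M)"
proof -
  have "norm ((\<Sum>A\<in>S. c A * f A) - (\<Sum>A\<in>S. c' A * f A)) = norm (\<Sum>A\<in>S. (c A - c' A) * f A)"
    by (simp add: sum_subtractf left_diff_distrib)
  also have "\<dots> \<le> (\<Sum>A\<in>S. norm ((c A - c' A) * f A))" by (rule norm_sum)
  also have "\<dots> \<le> (\<Sum>A\<in>S. \<rho> * M)"
  proof (rule sum_mono)
    fix A assume "A \<in> S"
    then have "norm (c A - c' A) \<le> \<rho>" "norm (f A) \<le> M" using assms by auto
    then show "norm ((c A - c' A) * f A) \<le> \<rho> * M"
      unfolding norm_mult by (intro mult_mono) (auto intro: order_trans[OF norm_ge_zero])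
  qed
  also have "\<dots> = real (card S) * (\<rho> * M)" by simp
  finally show ?thesis .
qed



lemma scalar_field_uniform_coefficient_net:
  assumes "scalar_field K" "finite S" "\<eta> > 0" "M \<ge> 0"
  shows "\<exists>N. finite N \<and> (\<forall>c'\<in>N. \<forall>A\<in>S. c' A \<in> K) \<and>
    (\<forall>c. (\<forall>A\<in>S. c A \<in> K \<and> cmod (c A) \<le> R) \<longrightarrow> (\<exists>c'\<in>N. \<forall>f. (\<forall>A\<in>S. cmod (f A) \<le> M) \<longrightarrow>
       cmod ((\<Sum>A\<in>S. c A * f A) - (\<Sum>A\<in>S. c' A * f A)) \<le> \<eta>))"
proof -
  define \<rho> where "\<rho> = \<eta> / (real (card S) * M + 1)"
  have cardM: "real (card S) * M \<ge> 0" using assms(4) by simp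
  then have "\<rho> > 0" using assms(3) unfolding \<rho>_def by (intro divide_pos_pos) auto
  then obtain N where N: "finite N" "\<forall>c'\<in>N. \<forall>A\<in>S. c' A \<in> K"
    and net: "\<forall>c. (\<forall>A\<in>S. c A \<in> K \<and> cmod (c A) \<le> R) \<longrightarrow> (\<exists>c'\<in>N. \<forall>A\<in>S. cmod (c A - c' A) \<le> \<rho>)"
    using scalar_field_coefficient_net[OF assms(1,2), of \<rho> R] by blast
  have small: "real (card S) * (\<rho> * M) \<le> \<eta>"
  proof -
    have "real (card S) * (\<rho> * M) \<le> (real (card S) * M + 1) * \<rho>"
      using \<open>\<rho> > 0\<close> by (simp add: algebra_simps)
    also have "\<dots> = \<eta>" unfolding \<rho>_def using cardM by (simp add: field_simps)
    finally show ?thesis .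
  qed
  have "\<exists>c'\<in>N. \<forall>f. (\<forall>A\<in>S. cmod (f A) \<le> M) \<longrightarrow>
      cmod ((\<Sum>A\<in>S. c A * f A) - (\<Sum>A\<in>S. c' A * f A)) \<le> \<eta>"
    if c: "\<forall>A\<in>S. c A \<in> K \<and> cmod (c A) \<le> R" for c
  proof -
    obtain c' where c': "c' \<in> N" "\<forall>A\<in>S. cmod (c A - c' A) \<le> \<rho>" using net c by blast
    have "cmod ((\<Sum>A\<in>S. c A * f A) - (\<Sum>A\<in>S. c' A * f A)) \<le> \<eta>" if "\<forall>A\<in>S. cmod (f A) \<le> M" for f
      using norm_sum_mult_diff_le[OF c'(2) that] small by linarith
    with c'(1) show ?thesis by blast
  qed
  with N show ?thesis by blast
qed

lemma Re_separation_perturb: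
  fixes x y x' y' :: complex
  assumes "Re x \<le> Re y - gap" "cmod (x - x') \<le> gap / 4" "cmod (y - y') \<le> gap / 4"
  shows "gap / 2 \<le> cmod (x' - y')"
proof -
  have "gap \<le> cmod (y - x)" using assms(1) complex_Re_le_cmod[of "y - x"] by simp
  moreover have "cmod (y - x) \<le> cmod (y - y') + cmod (y' - x') + cmod (x - x')"
    using norm_triangle_ineq[of "y - y'" "y' - x'"] norm_triangle_ineq[of "y - x'" "x' - x"]
    by (simp add: norm_minus_commute[of x' x])
  moreover have "cmod (y' - x') = cmod (x' - y')" by (rule norm_minus_commute)
  ultimately show ?thesis using assms(2,3) by linarith
qed

lemma polar_cnj_diff_coefficients:
  assumes "tvs K smul T" "\<sigma> \<in> polar K smul T U" "\<tau> \<in> polar K smul T U"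
    and bound: "\<forall>\<phi>\<in>polar K smul T U. \<forall>A\<in>S. cmod (\<phi> A) \<le> M"
  shows "\<forall>A\<in>S. cnj (\<sigma> A - \<tau> A) \<in> K \<and> cmod (cnj (\<sigma> A - \<tau> A)) \<le> 2 * M"
proof
  fix A assume "A \<in> S"
  have "cnj (\<sigma> A - \<tau> A) \<in> K"
    using scalar_field_cnj_diff[OF tvs_scalar_field[OF assms(1)]] tdual_in_scalar_field
      assms(2,3) polar_subset_tdual by blast
  moreover have "cmod (\<sigma> A) \<le> M" "cmod (\<tau> A) \<le> M" using bound assms(2,3) \<open>A \<in> S\<close> by blast+
  then have "cmod (cnj (\<sigma> A - \<tau> A)) \<le> 2 * M"
    using norm_triangle_ineq4[of "\<sigma> A" "\<tau> A"] unfolding complex_mod_cnj by linarith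
  ultimately show "cnj (\<sigma> A - \<tau> A) \<in> K \<and> cmod (cnj (\<sigma> A - \<tau> A)) \<le> 2 * M" ..
qed

section \<open>The upper limit\<close>

lemma limitin_selection_mem_wsH_limit:
  assumes tvs: "tvs K smul T" and zn: "zero_nhd T U" and G: "G \<in> CU K smul T U"
    and "\<F> \<noteq> bot" and conv: "wsH_tendsto F G \<F>" and sel: "\<forall>\<^sub>F i in \<F>. \<tau> i \<in> F i"
    and lim: "limitin (weakstar K smul T) \<tau> \<sigma> \<F>"
  shows "\<sigma> \<in> G"
proof (rule ccontr)
  assume "\<sigma> \<notin> G"
  have \<sigma>: "\<sigma> \<in> tdual K smul T"
    using lim by (simp add: limitin_def topspace_weakstar)
  obtain B gap where gap: "gap > 0" and separated: "\<forall>g\<in>G. Re (g B) \<le> Re (\<sigma> B) - gap"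
    using CU_separating_element[OF tvs zn G \<sigma> \<open>\<sigma> \<notin> G\<close>] by blast
  define W where "W = {\<tau> \<in> tdual K smul T. cmod (\<tau> B - \<sigma> B) < gap / 2}"
  have W_open: "openin (weakstar K smul T) W"
    unfolding W_def by (rule openin_weakstar_eval_ball)
  have "\<sigma> \<in> W" using \<sigma> gap by (simp add: W_def)
  with lim W_open have "\<forall>\<^sub>F i in \<F>. \<tau> i \<in> W"
    by (rule limitinD)
  moreover have "\<forall>\<^sub>F i in \<F>. dH B (F i) G < ereal (gap / 2)"
    using conv gap by (simp add: wsH_tendsto_def)
  ultimately have "\<forall>\<^sub>F i in \<F>. \<tau> i \<in> F i \<and> dH B (F i) G < ereal (gap / 2) \<and> \<tau> i \<in> W"
    using sel by (simp add: eventually_conj)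
  from eventually_happens'[OF \<open>\<F> \<noteq> bot\<close> this]
  obtain i where i: "\<tau> i \<in> F i" "dH B (F i) G < ereal (gap / 2)" "\<tau> i \<in> W"
    by blast
  obtain g where g: "g \<in> G" "cmod (\<tau> i B - g B) < gap / 2"
    using dH_lessD1[OF i(2,1)] by blast
  have "cmod (g B - \<sigma> B) \<le> cmod (\<tau> i B - g B) + cmod (\<tau> i B - \<sigma> B)"
    using norm_triangle_ineq4[of "\<tau> i B - \<sigma> B" "\<tau> i B - g B"] by (simp add: algebra_simps)
  also have "\<dots> < gap" using g(2) i(3) by (simp add: W_def)
  finally have "cmod (g B - \<sigma> B) < gap" .
  moreover have "gap \<le> cmod (g B - \<sigma> B)"
  proof -
    have "Re (g B) \<le> Re (\<sigma> B) - gap" using separated g(1) by blast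
    moreover have "Re (\<sigma> B - g B) \<le> cmod (\<sigma> B - g B)" by (rule complex_Re_le_cmod)
    ultimately show ?thesis by (simp add: norm_minus_commute)
  qed
  ultimately show False by simp
qed

lemma Ls_subset_wsH_limit:
  fixes J :: "'j set"
  assumes tvs: "tvs K smul T" and zn: "zero_nhd T U" and dir: "directed J le"
    and G: "G \<in> CU K smul T U" and conv: "wsH_converges J le F G"
  shows "Ls (weakstar K smul T) J le F \<subseteq> G"
proof
  fix \<sigma> assume "\<sigma> \<in> Ls (weakstar K smul T) J le F"
  then obtain I :: "('j \<times> ('a \<Rightarrow> complex) set) set" and leI s \<tau>
    where I: "directed I leI" "s ` I \<subseteq> J" "\<forall>j0\<in>J. \<exists>i0\<in>I. \<forall>i\<in>I. leI i0 i \<longrightarrow> le j0 (s i)"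
      and sel: "\<forall>i\<in>I. \<tau> i \<in> F (s i)" and lim: "net_limit (weakstar K smul T) I leI \<tau> \<sigma>"
    unfolding Ls_def by blast
  have "wsH_tendsto F G (net_filter J le)"
    using conv by (simp add: wsH_converges_iff_tendsto[OF dir])
  then have "wsH_tendsto (\<lambda>i. F (s i)) G (net_filter I leI)"
    by (rule wsH_tendsto_compose[OF _ filterlim_subnet[OF dir I]])
  moreover have "\<forall>\<^sub>F i in net_filter I leI. \<tau> i \<in> F (s i)"
    by (rule eventually_mono[OF eventually_in_net_filter[OF I(1)]]) (use sel in blast)
  moreover have "limitin (weakstar K smul T) \<tau> \<sigma> (net_filter I leI)"
    using lim by (simp add: net_limit_iff_limitin[OF I(1)])
  ultimately show "\<sigma> \<in> G"
    by (rule limitin_selection_mem_wsH_limit[OF tvs zn G net_filter_ne_bot[OF I(1)]])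
qed

section \<open>The lower limit\<close>

text \<open>If \<open>C\<close> misses the box around \<open>\<sigma>\<close>, the coefficients separating \<open>C\<close> from \<open>\<sigma>\<close> range over
  a compact set, so finitely many pseudometrics \<open>dH B\<close>, one for each point of a finite net of
  coefficients, detect this.\<close>

lemma CU_meets_box_if_dH_small:
  assumes tvs: "tvs K smul T" and zn: "zero_nhd T U" and G: "G \<in> CU K smul T U"
    and \<sigma>G: "\<sigma> \<in> G" and S: "finite S" and \<epsilon>: "\<epsilon> > 0"
  shows "\<exists>N. finite N \<and> (\<forall>C\<in>CU K smul T U. (\<forall>B\<in>N. dH B C G < ereal (\<epsilon>\<^sup>2 / 8)) \<longrightarrow>
           (\<exists>\<tau>\<in>C. \<forall>A\<in>S. cmod (\<tau> A - \<sigma> A) < \<epsilon>))"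
proof -
  obtain M where M: "M \<ge> 0" "\<forall>\<tau>\<in>polar K smul T U. \<forall>A\<in>S. cmod (\<tau> A) \<le> M"
    using polar_bounded_on_finite[OF tvs zn S] by blast
  have \<sigma>: "\<sigma> \<in> polar K smul T U" using G \<sigma>G by (auto simp: CU_def)
  define gap where "gap = \<epsilon>\<^sup>2 / 2"
  have gap: "gap > 0" using \<epsilon> by (simp add: gap_def)
  obtain N where N: "finite N" "\<forall>c'\<in>N. \<forall>A\<in>S. c' A \<in> K"
    and net: "\<forall>c. (\<forall>A\<in>S. c A \<in> K \<and> cmod (c A) \<le> 2 * M) \<longrightarrow> (\<exists>c'\<in>N. \<forall>f. (\<forall>A\<in>S. cmod (f A) \<le> M)
                \<longrightarrow> cmod ((\<Sum>A\<in>S. c A * f A) - (\<Sum>A\<in>S. c' A * f A)) \<le> gap / 4)"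
    using scalar_field_uniform_coefficient_net[OF tvs_scalar_field[OF tvs] S _ M(1), of "gap / 4" "2 * M"]
      gap by auto
  define B where "B c = (\<Sum>A\<in>S. smul (c A) A)" for c :: "'a \<Rightarrow> complex"
  have "\<exists>\<tau>\<in>C. \<forall>A\<in>S. cmod (\<tau> A - \<sigma> A) < \<epsilon>"
    if C: "C \<in> CU K smul T U" and close: "\<forall>c'\<in>N. dH (B c') C G < ereal (gap / 4)" for C
  proof (rule ccontr)
    assume "\<not> (\<exists>\<tau>\<in>C. \<forall>A\<in>S. cmod (\<tau> A - \<sigma> A) < \<epsilon>)"
    then have "\<forall>\<tau>\<in>C. \<exists>A\<in>S. \<epsilon> \<le> cmod (\<tau> A - \<sigma> A)" by (simp add: not_less)
    then obtain c0 where c0: "c0 \<in> C" and sep: "\<forall>\<tau>\<in>C. Re (\<Sum>A\<in>S. cnj (\<sigma> A - c0 A) * \<tau> A)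
                            \<le> Re (\<Sum>A\<in>S. cnj (\<sigma> A - c0 A) * \<sigma> A) - \<epsilon>\<^sup>2 / 2"
      using CU_separation[OF tvs zn C S \<epsilon>] by blast
    have C_polar: "C \<subseteq> polar K smul T U" using C by (simp add: CU_def)
    then have "\<forall>A\<in>S. cnj (\<sigma> A - c0 A) \<in> K \<and> cmod (cnj (\<sigma> A - c0 A)) \<le> 2 * M"
      using polar_cnj_diff_coefficients[OF tvs \<sigma> _ M(2)] c0 by blast
    then obtain c' where c': "c' \<in> N" and c'_near: "\<forall>f. (\<forall>A\<in>S. cmod (f A) \<le> M) \<longrightarrow>
        cmod ((\<Sum>A\<in>S. cnj (\<sigma> A - c0 A) * f A) - (\<Sum>A\<in>S. c' A * f A)) \<le> gap / 4"
      using net[rule_format, of "\<lambda>A. cnj (\<sigma> A - c0 A)"] by blast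
    obtain \<tau> where \<tau>: "\<tau> \<in> C" "cmod (\<tau> (B c') - \<sigma> (B c')) < gap / 4"
      using dH_lessD2[OF _ \<sigma>G, of "B c'" C "gap / 4"] close c' by blast
    have \<tau>P: "\<tau> \<in> polar K smul T U" using C_polar \<tau>(1) by blast
    have eval: "\<phi> (B c') = (\<Sum>A\<in>S. c' A * \<phi> A)" if "\<phi> \<in> polar K smul T U" for \<phi>
      unfolding B_def using that polar_subset_tdual N(2) c'
      by (intro tdual_sum_smul[OF _ S]) blast+
    have "gap / 2 \<le> cmod (\<tau> (B c') - \<sigma> (B c'))"
      unfolding eval[OF \<tau>P] eval[OF \<sigma>]
    proof (rule Re_separation_perturb)
      show "Re (\<Sum>A\<in>S. cnj (\<sigma> A - c0 A) * \<tau> A) \<le> Re (\<Sum>A\<in>S. cnj (\<sigma> A - c0 A) * \<sigma> A) - gap"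
        using sep \<tau>(1) by (simp add: gap_def)
      show "cmod ((\<Sum>A\<in>S. cnj (\<sigma> A - c0 A) * \<tau> A) - (\<Sum>A\<in>S. c' A * \<tau> A)) \<le> gap / 4"
        using c'_near M(2) \<tau>P by blast
      show "cmod ((\<Sum>A\<in>S. cnj (\<sigma> A - c0 A) * \<sigma> A) - (\<Sum>A\<in>S. c' A * \<sigma> A)) \<le> gap / 4"
        using c'_near M(2) \<sigma> by blast
    qed
    then show False using \<tau>(2) gap by simp
  qed
  moreover have "\<epsilon>\<^sup>2 / 8 = gap / 4" by (simp add: gap_def)
  ultimately show ?thesis
    using N(1) by (intro exI[of _ "B ` N"]) auto
qed

lemma wsH_tendsto_eventually_near:
  assumes tvs: "tvs K smul T" and zn: "zero_nhd T U" and G: "G \<in> CU K smul T U"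
    and FCU: "\<forall>\<^sub>F j in \<F>. F j \<in> CU K smul T U" and conv: "wsH_tendsto F G \<F>"
    and \<sigma>: "\<sigma> \<in> G" and S: "finite S" and \<epsilon>: "\<epsilon> > 0"
  shows "\<forall>\<^sub>F j in \<F>. \<exists>\<tau>\<in>F j. \<forall>A\<in>S. cmod (\<tau> A - \<sigma> A) < \<epsilon>"
proof -
  obtain N where N: "finite N" and near: "\<forall>C\<in>CU K smul T U. (\<forall>B\<in>N. dH B C G < ereal (\<epsilon>\<^sup>2 / 8)) \<longrightarrow>
      (\<exists>\<tau>\<in>C. \<forall>A\<in>S. cmod (\<tau> A - \<sigma> A) < \<epsilon>)"
    using CU_meets_box_if_dH_small[OF tvs zn G \<sigma> S \<epsilon>] by blast
  have "\<forall>B\<in>N. \<forall>\<^sub>F j in \<F>. dH B (F j) G < ereal (\<epsilon>\<^sup>2 / 8)"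
    using conv \<epsilon> by (simp add: wsH_tendsto_def)
  then have "\<forall>\<^sub>F j in \<F>. \<forall>B\<in>N. dH B (F j) G < ereal (\<epsilon>\<^sup>2 / 8)"
    by (rule eventually_ball_finite[OF N])
  with FCU have "\<forall>\<^sub>F j in \<F>. F j \<in> CU K smul T U \<and> (\<forall>B\<in>N. dH B (F j) G < ereal (\<epsilon>\<^sup>2 / 8))"
    by (rule eventually_conj)
  then show ?thesis
    by (rule eventually_mono) (use near in blast)
qed

lemma decseq_diagonal_choice:
  fixes W :: "nat \<Rightarrow> 'b set"
  assumes "decseq W" "\<forall>j\<in>J. F j \<noteq> {}"
    and limit: "\<forall>j\<in>J. (\<forall>n. F j \<inter> W n \<noteq> {}) \<longrightarrow> F j \<inter> (\<Inter>n. W n) \<noteq> {}"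
  shows "\<exists>s. \<forall>j\<in>J. s j \<in> F j \<and> (\<forall>n. F j \<inter> W n \<noteq> {} \<longrightarrow> s j \<in> W n)"
proof -
  have "\<exists>x. x \<in> F j \<and> (\<forall>n. F j \<inter> W n \<noteq> {} \<longrightarrow> x \<in> W n)" if j: "j \<in> J" for j
  proof (cases "\<forall>n. F j \<inter> W n \<noteq> {}")
    case True
    then have "F j \<inter> (\<Inter>n. W n) \<noteq> {}" using limit j by simp
    then obtain x where "x \<in> F j" "\<forall>n. x \<in> W n" by blast
    then show ?thesis by blast
  next
    case False
    then obtain n0 where n0: "F j \<inter> W n0 = {}" by blast
    define hit where "hit = {n. F j \<inter> W n \<noteq> {}}"
    have "hit \<subseteq> {..<n0}"
    proof
      fix n assume "n \<in> hit"
      show "n \<in> {..<n0}"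
      proof (rule ccontr)
        assume "n \<notin> {..<n0}"
        then have "W n \<subseteq> W n0" using assms(1) by (simp add: decseq_def)
        then show False using \<open>n \<in> hit\<close> n0 by (auto simp: hit_def)
      qed
    qed
    then have "finite hit" by (rule finite_subset) simp
    show ?thesis
    proof (cases "hit = {}")
      case True
      then show ?thesis using assms(2) j by (auto simp: hit_def)
    next
      case False
      with \<open>finite hit\<close> have "Max hit \<in> hit" by (rule Max_in)
      then obtain x where x: "x \<in> F j" "x \<in> W (Max hit)" by (auto simp: hit_def)
      have "x \<in> W n" if "n \<in> hit" for n
        using x(2) decseqD[OF assms(1) Max_ge[OF \<open>finite hit\<close> that]] by blast
      with x(1) show ?thesis by (auto simp: hit_def)
    qed
  qed
  then show ?thesis by (rule bchoice[rule_format])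
qed

definition seq_nbhd :: "(nat \<Rightarrow> 'a) \<Rightarrow> ('a \<Rightarrow> complex) \<Rightarrow> nat \<Rightarrow> ('a \<Rightarrow> complex) set" where
  "seq_nbhd d \<sigma> n = {\<tau>. \<forall>k\<le>n. cmod (\<tau> (d k) - \<sigma> (d k)) < inverse (real (Suc n))}"

lemma seq_nbhd_self: "\<sigma> \<in> seq_nbhd d \<sigma> n"
  by (simp add: seq_nbhd_def)

lemma decseq_seq_nbhd: "decseq (seq_nbhd d \<sigma>)"
  unfolding decseq_def
proof (intro allI impI subsetI)
  fix m n \<tau> assume "m \<le> n" and \<tau>: "\<tau> \<in> seq_nbhd d \<sigma> n"
  have "cmod (\<tau> (d k) - \<sigma> (d k)) < inverse (real (Suc m))" if "k \<le> m" for k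
  proof -
    have "cmod (\<tau> (d k) - \<sigma> (d k)) < inverse (real (Suc n))"
      using \<tau> that \<open>m \<le> n\<close> by (simp add: seq_nbhd_def)
    also have "\<dots> \<le> inverse (real (Suc m))"
      using \<open>m \<le> n\<close> by (intro le_imp_inverse_le) auto
    finally show ?thesis .
  qed
  then show "\<tau> \<in> seq_nbhd d \<sigma> m" by (simp add: seq_nbhd_def)
qed

lemma polar_dense_sequence_approx:
  assumes "tvs K smul T" "zero_nhd T U" "T closure_of range d = UNIV" "e > 0"
  shows "\<exists>k. \<forall>\<tau>\<in>polar K smul T U. cmod (\<tau> (d k) - \<tau> A) \<le> e"
proof -
  obtain N where N: "openin T N" "A \<in> N" "\<forall>x\<in>N. \<forall>\<tau>\<in>polar K smul T U. cmod (\<tau> x - \<tau> A) \<le> e"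
    using polar_equicontinuous[OF assms(1,2,4)] by blast
  have "A \<in> T closure_of range d" using assms(3) by simp
  then have "\<forall>V. A \<in> V \<and> openin T V \<longrightarrow> (\<exists>y. y \<in> range d \<and> y \<in> V)"
    by (simp add: in_closure_of)
  then obtain k where "d k \<in> N" using N(1,2) by blast
  then show ?thesis using N(3) by blast
qed

lemma polar_seq_nbhd_subset_box:
  assumes tvs: "tvs K smul T" and zn: "zero_nhd T U" and dense: "T closure_of range d = UNIV"
    and \<sigma>: "\<sigma> \<in> polar K smul T U" and S: "finite S" "e > 0"
  shows "\<exists>n. \<forall>\<tau>\<in>polar K smul T U \<inter> seq_nbhd d \<sigma> n. \<forall>A\<in>S. cmod (\<tau> A - \<sigma> A) < e"
proof -
  have "\<forall>A\<in>S. \<exists>k. \<forall>\<tau>\<in>polar K smul T U. cmod (\<tau> (d k) - \<tau> A) \<le> e / 3"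
    by (intro ballI polar_dense_sequence_approx[OF tvs zn dense]) (use S(2) in simp)
  then obtain k where k: "\<forall>A\<in>S. \<forall>\<tau>\<in>polar K smul T U. cmod (\<tau> (d (k A)) - \<tau> A) \<le> e / 3"
    using bchoice[of S "\<lambda>A k. \<forall>\<tau>\<in>polar K smul T U. cmod (\<tau> (d k) - \<tau> A) \<le> e / 3"] by blast
  obtain n0 where n0: "inverse (real (Suc n0)) < e / 3"
    using reals_Archimedean[of "e / 3"] S(2) by auto
  define n where "n = Max (insert n0 (k ` S))"
  have n: "n0 \<le> n" "\<forall>A\<in>S. k A \<le> n" using S(1) by (auto simp: n_def)
  have "cmod (\<tau> A - \<sigma> A) < e"
    if \<tau>: "\<tau> \<in> polar K smul T U" "\<tau> \<in> seq_nbhd d \<sigma> n" and A: "A \<in> S" for \<tau> A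
  proof -
    have "cmod (\<tau> (d (k A)) - \<sigma> (d (k A))) < inverse (real (Suc n))"
      using \<tau>(2) n(2) A by (simp add: seq_nbhd_def)
    also have "\<dots> \<le> inverse (real (Suc n0))"
      using n(1) by (intro le_imp_inverse_le) auto
    finally have "cmod (\<tau> (d (k A)) - \<sigma> (d (k A))) < e / 3" using n0 by linarith
    moreover have "cmod (\<tau> A - \<tau> (d (k A))) \<le> e / 3" "cmod (\<sigma> (d (k A)) - \<sigma> A) \<le> e / 3"
      using k A \<tau>(1) \<sigma> by (simp_all add: norm_minus_commute)
    moreover have "cmod (\<tau> A - \<sigma> A)
        \<le> cmod (\<tau> A - \<tau> (d (k A))) + cmod (\<tau> (d (k A)) - \<sigma> (d (k A))) + cmod (\<sigma> (d (k A)) - \<sigma> A)"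
      using norm_triangle_ineq[of "\<tau> A - \<tau> (d (k A))" "\<tau> (d (k A)) - \<sigma> (d (k A))"]
        norm_triangle_ineq[of "\<tau> A - \<sigma> (d (k A))" "\<sigma> (d (k A)) - \<sigma> A"]
      by simp
    ultimately show ?thesis by linarith
  qed
  then show ?thesis by blast
qed

lemma polar_seq_nbhd_subset:
  assumes tvs: "tvs K smul T" and zn: "zero_nhd T U" and dense: "T closure_of range d = UNIV"
    and V: "openin (weakstar K smul T) V" "\<sigma> \<in> V" and \<sigma>: "\<sigma> \<in> polar K smul T U"
  shows "\<exists>n. polar K smul T U \<inter> seq_nbhd d \<sigma> n \<subseteq> V"
proof -
  obtain S e where S: "finite S" "e > 0"
    and box: "\<forall>\<tau>\<in>tdual K smul T. (\<forall>A\<in>S. cmod (\<tau> A - \<sigma> A) < e) \<longrightarrow> \<tau> \<in> V"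
    using openin_weakstar_contains_box[OF V] by blast
  obtain n where "\<forall>\<tau>\<in>polar K smul T U \<inter> seq_nbhd d \<sigma> n. \<forall>A\<in>S. cmod (\<tau> A - \<sigma> A) < e"
    using polar_seq_nbhd_subset_box[OF tvs zn dense \<sigma> S] by blast
  then have "polar K smul T U \<inter> seq_nbhd d \<sigma> n \<subseteq> V"
    using box polar_subset_tdual by blast
  then show ?thesis by blast
qed

lemma CU_mem_if_seq_nbhds_meet:
  assumes tvs: "tvs K smul T" and zn: "zero_nhd T U" and dense: "T closure_of range d = UNIV"
    and C: "C \<in> CU K smul T U" and \<sigma>: "\<sigma> \<in> polar K smul T U"
    and meet: "\<forall>n. C \<inter> seq_nbhd d \<sigma> n \<noteq> {}"
  shows "\<sigma> \<in> C"
proof (rule ccontr)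
  assume "\<sigma> \<notin> C"
  have "openin (weakstar K smul T) (tdual K smul T - C)"
    using C by (simp add: CU_def closedin_def topspace_weakstar)
  moreover have "\<sigma> \<in> tdual K smul T - C" using \<sigma> polar_subset_tdual \<open>\<sigma> \<notin> C\<close> by blast
  ultimately obtain n where n: "polar K smul T U \<inter> seq_nbhd d \<sigma> n \<subseteq> tdual K smul T - C"
    using polar_seq_nbhd_subset[OF tvs zn dense _ _ \<sigma>] by blast
  moreover have "C \<subseteq> polar K smul T U" using C by (simp add: CU_def)
  ultimately show False using meet by blast
qed

lemma separable_space_dense_sequence:
  assumes "separable_space X" "topspace X \<noteq> {}"
  shows "\<exists>d :: nat \<Rightarrow> 'a. X closure_of range d = topspace X"
proof -
  obtain C where C: "countable C" "X closure_of C = topspace X"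
    using assms(1) by (auto simp: separable_space_def)
  have "C \<noteq> {}"
  proof
    assume "C = {}"
    then have "topspace X = {}" using C(2) by (metis closure_of_empty)
    then show False using assms(2) by blast
  qed
  then have "range (from_nat_into C) = C" using C(1) by (rule range_from_nat_into)
  then show ?thesis using C(2) by metis
qed

lemma limitin_weakstar_if_eventually_seq_nbhd:
  assumes tvs: "tvs K smul T" and zn: "zero_nhd T U" and dense: "T closure_of range d = UNIV"
    and \<sigma>: "\<sigma> \<in> polar K smul T U" and polar: "\<forall>\<^sub>F j in \<F>. s j \<in> polar K smul T U"
    and deep: "\<And>n. \<forall>\<^sub>F j in \<F>. s j \<in> seq_nbhd d \<sigma> n"
  shows "limitin (weakstar K smul T) s \<sigma> \<F>"
  unfolding limitin_def
proof (intro conjI allI impI)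
  show "\<sigma> \<in> topspace (weakstar K smul T)"
    using subsetD[OF polar_subset_tdual \<sigma>] by (simp add: topspace_weakstar)
  fix V assume "openin (weakstar K smul T) V \<and> \<sigma> \<in> V"
  then obtain n where n: "polar K smul T U \<inter> seq_nbhd d \<sigma> n \<subseteq> V"
    using polar_seq_nbhd_subset[OF tvs zn dense _ _ \<sigma>] by blast
  from polar deep[of n] show "\<forall>\<^sub>F j in \<F>. s j \<in> V"
    by (rule eventually_elim2) (use n in blast)
qed

text \<open>Separability makes the weak* topology on the polar first countable, with the
  neighbourhood base \<open>seq_nbhd d \<sigma>\<close>; a single net converging to \<open>\<sigma>\<close> is then obtained by
  choosing, for every index, a point of \<open>F j\<close> as deep in this base as \<open>F j\<close> reaches.\<close>

lemma wsH_tendsto_selection: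
  assumes tvs: "tvs K smul T" and sep: "separable_space T" and zn: "zero_nhd T U"
    and FCU: "\<forall>j\<in>J. F j \<in> CU K smul T U" and evJ: "\<forall>\<^sub>F j in \<F>. j \<in> J"
    and G: "G \<in> CU K smul T U" and conv: "wsH_tendsto F G \<F>" and \<sigma>G: "\<sigma> \<in> G"
  shows "\<exists>s. (\<forall>j\<in>J. s j \<in> F j) \<and> limitin (weakstar K smul T) s \<sigma> \<F>"
proof -
  have "topspace T = UNIV" using tvs by (simp add: tvs_def)
  then obtain d :: "nat \<Rightarrow> 'a" where dense: "T closure_of range d = UNIV"
    using separable_space_dense_sequence[OF sep] by auto
  have \<sigma>: "\<sigma> \<in> polar K smul T U" using G \<sigma>G by (auto simp: CU_def)
  define W where "W = seq_nbhd d \<sigma>"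
  have "\<forall>j\<in>J. (\<forall>n. F j \<inter> W n \<noteq> {}) \<longrightarrow> F j \<inter> (\<Inter>n. W n) \<noteq> {}"
  proof (intro ballI impI)
    fix j assume "j \<in> J" "\<forall>n. F j \<inter> W n \<noteq> {}"
    then have "\<sigma> \<in> F j"
      using CU_mem_if_seq_nbhds_meet[OF tvs zn dense _ \<sigma>] FCU by (simp add: W_def)
    then show "F j \<inter> (\<Inter>n. W n) \<noteq> {}" by (auto simp: W_def seq_nbhd_self)
  qed
  moreover have "\<forall>j\<in>J. F j \<noteq> {}" using FCU by (simp add: CU_def)
  ultimately obtain s where s: "\<forall>j\<in>J. s j \<in> F j \<and> (\<forall>n. F j \<inter> W n \<noteq> {} \<longrightarrow> s j \<in> W n)"
    using decseq_diagonal_choice[OF decseq_seq_nbhd[of d \<sigma>]] unfolding W_def by blast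
  have "\<forall>\<^sub>F j in \<F>. F j \<in> CU K smul T U"
    by (rule eventually_mono[OF evJ]) (use FCU in blast)
  have deep: "\<forall>\<^sub>F j in \<F>. s j \<in> seq_nbhd d \<sigma> n" for n
  proof -
    have "\<forall>\<^sub>F j in \<F>. \<exists>\<tau>\<in>F j. \<forall>A\<in>d ` {..n}. cmod (\<tau> A - \<sigma> A) < inverse (real (Suc n))"
      by (rule wsH_tendsto_eventually_near[OF tvs zn G \<open>\<forall>\<^sub>F j in \<F>. F j \<in> CU K smul T U\<close> conv \<sigma>G])
        simp_all
    with evJ show ?thesis
    proof (rule eventually_elim2)
      fix j assume "j \<in> J" and "\<exists>\<tau>\<in>F j. \<forall>A\<in>d ` {..n}. cmod (\<tau> A - \<sigma> A) < inverse (real (Suc n))"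
      then have "F j \<inter> W n \<noteq> {}" by (auto simp: W_def seq_nbhd_def)
      then show "s j \<in> seq_nbhd d \<sigma> n" using s \<open>j \<in> J\<close> by (simp add: W_def)
    qed
  qed
  have "s j \<in> polar K smul T U" if "j \<in> J" for j
  proof -
    have "s j \<in> F j" using s that by blast
    moreover have "F j \<subseteq> polar K smul T U" using FCU that by (simp add: CU_def)
    ultimately show ?thesis by blast
  qed
  then have "\<forall>\<^sub>F j in \<F>. s j \<in> polar K smul T U"
    by (rule eventually_mono[OF evJ])
  then have "limitin (weakstar K smul T) s \<sigma> \<F>"
    using limitin_weakstar_if_eventually_seq_nbhd[OF tvs zn dense \<sigma>] deep by blast
  with s show ?thesis by blast
qed

lemma wsH_limit_subset_Li:
  assumes tvs: "tvs K smul T" and sep: "separable_space T" and zn: "zero_nhd T U"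
    and dir: "directed J le" and FCU: "\<forall>j\<in>J. F j \<in> CU K smul T U"
    and G: "G \<in> CU K smul T U" and conv: "wsH_converges J le F G"
  shows "G \<subseteq> Li (weakstar K smul T) J le F"
proof
  fix \<sigma> assume "\<sigma> \<in> G"
  have "wsH_tendsto F G (net_filter J le)"
    using conv by (simp add: wsH_converges_iff_tendsto[OF dir])
  then obtain s where s: "\<forall>j\<in>J. s j \<in> F j" "limitin (weakstar K smul T) s \<sigma> (net_filter J le)"
    using wsH_tendsto_selection[OF tvs sep zn FCU eventually_in_net_filter[OF dir] G _ \<open>\<sigma> \<in> G\<close>]
    by blast
  then have "net_limit (weakstar K smul T) J le s \<sigma>"
    by (simp add: net_limit_iff_limitin[OF dir])
  moreover obtain j0 where "j0 \<in> J" using directed_nonempty[OF dir] by blast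
  ultimately show "\<sigma> \<in> Li (weakstar K smul T) J le F"
    unfolding Li_def using s(1) by blast
qed

theorem corollary3p18:
  fixes K :: "complex set" and smul :: "complex \<Rightarrow> 'a::ab_group_add \<Rightarrow> 'a"
    and T :: "'a topology" and U :: "'a set"
    and J :: "'j set" and le :: "'j \<Rightarrow> 'j \<Rightarrow> bool"
    and F :: "'j \<Rightarrow> ('a \<Rightarrow> complex) set"
  assumes "tvs K smul T"
    and "separable_space T"
    and "dual_separates_points K smul T"
    and "zero_nhd T U"
    and "directed J le"
    and "\<forall>j\<in>J. F j \<in> CU K smul T U"
    and "\<exists>G\<in>CU K smul T U. wsH_converges J le F G"
  shows "Li (weakstar K smul T) J le F = Ls (weakstar K smul T) J le F
    \<and> Li (weakstar K smul T) J le F \<in> CU K smul T U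
    \<and> wsH_converges J le F (Li (weakstar K smul T) J le F)"
proof -
  \<comment> \<open>\<open>Li\<close> and \<open>Ls\<close> are identified with \<open>G\<close> directly.\<close>
  from assms(7) obtain G where G: "G \<in> CU K smul T U" and conv: "wsH_converges J le F G" by blast
  have "Ls (weakstar K smul T) J le F \<subseteq> G"
    by (rule Ls_subset_wsH_limit[OF assms(1,4,5) G conv])
  moreover have "G \<subseteq> Li (weakstar K smul T) J le F"
    by (rule wsH_limit_subset_Li[OF assms(1,2,4,5,6) G conv])
  moreover have "Li (weakstar K smul T) J le F \<subseteq> Ls (weakstar K smul T) J le F"
    by (rule Li_subset_Ls[OF assms(5)])
  ultimately have "Li (weakstar K smul T) J le F = G" "Ls (weakstar K smul T) J le F = G"
    by blast+
  with G conv show ?thesis by simp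
qed

end
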